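(* Let $n\ge5$, let $G$ and $H$ be non-trivial groups, let $\sigma\colon G\to S_n$ be a surjective homomorphism, and let $W=H\wr_\sigma G=H^n\rtimes_\sigma G$. Then the following are equivalent: ($\ast$) every abelian normal subgroup of $W$ is contained in $H^n$ (identified with $\{(\mathbf h,1)\}$); ($\ast\ast$) $\ker\sigma$ contains no non-trivial abelian normal subgroup of $G$.
   Context: For $n\ge2$, groups $G,H$ and a homomorphism $\sigma\colon G\to S_n$, $H\wr_\sigma G=H^n\rtimes_\sigma G$ is the semidirect product in which $G$ acts on $H^n$ by permuting coordinates through $\sigma$: $g\cdot(h_1,\dots,h_n)=(h_{\sigma(g)(1)},\dots,h_{\sigma(g)(n)})$ (with the composition convention in $S_n$ making this a left action); elements are pairs $(\mathbf h,g)$ with $(\mathbf h,g)(\mathbf k,x)=(\mathbf h\cdot g\mathbf k,gx)$. *)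

theory Defs
  imports "HOL-Algebra.Algebra"
begin

text \<open>Since sym_group composes as functions, the left action of g on H^n is
  (g \<cdot> k) i = k ((sigma g)^-1 i).\<close>

definition wr_act :: "('b, 'd) monoid_scheme \<Rightarrow> nat \<Rightarrow> ('a \<Rightarrow> nat \<Rightarrow> nat) \<Rightarrow> 'a \<Rightarrow> (nat \<Rightarrow> 'b) \<Rightarrow> (nat \<Rightarrow> 'b)"
  where "wr_act H n \<sigma> g k = (\<lambda>i\<in>{1..n}. k (Hilbert_Choice.inv (\<sigma> g) i))"

definition wreath :: "('b, 'd) monoid_scheme \<Rightarrow> nat \<Rightarrow> ('a, 'c) monoid_scheme \<Rightarrow> ('a \<Rightarrow> nat \<Rightarrow> nat)
    \<Rightarrow> ((nat \<Rightarrow> 'b) \<times> 'a) monoid"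
  where "wreath H n G \<sigma> =
    \<lparr> carrier = ({1..n} \<rightarrow>\<^sub>E carrier H) \<times> carrier G,
      monoid.mult = (\<lambda>(h, g) (k, x). ((\<lambda>i\<in>{1..n}. h i \<otimes>\<^bsub>H\<^esub> wr_act H n \<sigma> g k i), g \<otimes>\<^bsub>G\<^esub> x)),
      monoid.one = ((\<lambda>i\<in>{1..n}. \<one>\<^bsub>H\<^esub>), \<one>\<^bsub>G\<^esub>) \<rparr>"

definition wr_base :: "('b, 'd) monoid_scheme \<Rightarrow> nat \<Rightarrow> ('a, 'c) monoid_scheme \<Rightarrow> ((nat \<Rightarrow> 'b) \<times> 'a) set"
  where "wr_base H n G = ({1..n} \<rightarrow>\<^sub>E carrier H) \<times> {\<one>\<^bsub>G\<^esub>}"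

end

theory Submission
  imports Defs
begin

text \<open>The projection \<open>W \<rightarrow> G\<close> is a surjective homomorphism with kernel the base \<open>H\<^sup>n\<close>. An abelian
  normal subgroup of \<open>W\<close> therefore projects to an abelian normal subgroup of \<open>G\<close>, and further via
  \<open>\<sigma>\<close> to one of \<open>S\<^sub>n\<close>, which is trivial for \<open>n \<ge> 5\<close>. So the projection lies in \<open>ker \<sigma>\<close>, and
  under (\<open>**\<close>) it is trivial, i.e. the subgroup lies in \<open>H\<^sup>n\<close>. Conversely \<open>G\<close> embeds in \<open>W\<close> as
  \<open>{(1, g)}\<close>; for \<open>g \<in> ker \<sigma>\<close> conjugation by \<open>(h, x)\<close> sends \<open>(1, g)\<close> to \<open>(1, x g x\<inverse>)\<close>, so an abelian
  normal \<open>N \<subseteq> ker \<sigma>\<close> embeds as an abelian normal subgroup of \<open>W\<close> meeting \<open>H\<^sup>n\<close> trivially.\<close>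

lemma ex_in_atLeastAtMost_notin_set:
  assumes "length xs < n"
  shows "\<exists>x\<in>{1..n}. x \<notin> set xs"
proof (rule ccontr)
  assume "\<not> ?thesis"
  then have "card {1..n} \<le> card (set xs)"
    by (intro card_mono) auto
  with card_length[of xs] assms show False
    by simp
qed

lemma abelian_normal_sym_group_fixpoint_imp_id:
  assumes K: "K \<lhd> sym_group n"
    and comm: "\<forall>p\<in>K. \<forall>q\<in>K. p \<otimes>\<^bsub>sym_group n\<^esub> q = q \<otimes>\<^bsub>sym_group n\<^esub> p"
    and p: "p \<in> K" and fixed: "p c = c" "c \<in> {1..n}"
  shows "p = id"
proof (rule ccontr)
  assume "p \<noteq> id"
  then obtain a where a: "p a \<noteq> a"
    by (auto simp: fun_eq_iff)
  have perm: "p permutes {1..n}"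
    using K p normal_imp_subgroup subgroup.subset sym_group_carrier by blast
  \<comment> \<open>\<open>p\<close> commutes with its conjugate by \<open>t\<close>; evaluating both products at \<open>a\<close> gives \<open>c = p a\<close>.\<close>
  define t where "t = transpose (p a) c"
  have "t permutes {1..n}"
    unfolding t_def using perm a fixed by (metis permutes_in_image permutes_not_in permutes_swap_id)
  then have "t \<circ> p \<circ> t \<in> K"
    using normal.inv_op_closed2[OF K, of t p] p by (simp add: sym_group_carrier sym_group_mult t_def)
  then have "p \<circ> (t \<circ> p \<circ> t) = (t \<circ> p \<circ> t) \<circ> p"
    using comm p by (simp add: sym_group_mult)
  then have "p (t (p (t a))) = t (p (t (p a)))"
    by (metis comp_apply)
  moreover have "c \<noteq> a" "c \<noteq> p a"
    using a fixed perm by (auto dest: permutes_inj injD)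
  ultimately show False
    using a fixed by (simp add: t_def)
qed

lemma abelian_normal_subgroup_sym_group_trivial:
  assumes n: "n \<ge> 5" and K: "K \<lhd> sym_group n"
    and comm: "\<forall>p\<in>K. \<forall>q\<in>K. p \<otimes>\<^bsub>sym_group n\<^esub> q = q \<otimes>\<^bsub>sym_group n\<^esub> p"
  shows "K = {id}"
proof -
  interpret K: subgroup K "sym_group n"
    by (rule normal_imp_subgroup[OF K])
  have "p = id" if p: "p \<in> K" for p
  proof (rule ccontr)
    assume "p \<noteq> id"
    then obtain a where a: "p a \<noteq> a"
      by (auto simp: fun_eq_iff)
    have perm: "p permutes {1..n}"
      using K.subset p by (auto simp: sym_group_carrier)
    obtain c where c: "c \<in> {1..n}" "c \<notin> set [a, p a]"
      using ex_in_atLeastAtMost_notin_set[of "[a, p a]" n] n by auto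
    obtain e where e: "e \<in> {1..n}" "e \<notin> set [a, p a, c, p c]"
      using ex_in_atLeastAtMost_notin_set[of "[a, p a, c, p c]" n] n by auto
    have "p c \<noteq> c"
      using abelian_normal_sym_group_fixpoint_imp_id[OF K comm p _ c(1)] \<open>p \<noteq> id\<close> by blast
    define t where "t = transpose c e"
    define q where "q = t \<circ> p \<circ> t"
    have "t permutes {1..n}"
      unfolding t_def using c e by (simp add: permutes_swap_id)
    then have q: "q \<in> K"
      using normal.inv_op_closed2[OF K, of t p] p by (simp add: sym_group_carrier sym_group_mult q_def t_def)
    then have q_perm: "q permutes {1..n}"
      using K.subset by (auto simp: sym_group_carrier)
    \<comment> \<open>\<open>q\<close> agrees with \<open>p\<close> at \<open>a\<close>, so \<open>inv' q \<circ> p\<close> has a fixed point and \<open>p = q\<close>; but \<open>q c \<noteq> p c\<close>.\<close>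
    have "q a = p a"
      using a c e by (simp add: q_def t_def)
    have "inv' q \<circ> p \<in> K"
      using K.m_closed[OF K.m_inv_closed[OF q] p] q_perm by (simp add: sym_group_carrier sym_group_mult)
    moreover have "(inv' q \<circ> p) a = a"
      using permutes_inverses(2)[OF q_perm, of a] by (simp add: \<open>q a = p a\<close>)
    moreover have "a \<in> {1..n}"
      using perm a by (meson permutes_not_in)
    ultimately have "inv' q \<circ> p = id"
      by (intro abelian_normal_sym_group_fixpoint_imp_id[OF K comm])
    have "p = q \<circ> inv' q \<circ> p"
      by (simp add: permutes_inv_o(1)[OF q_perm])
    also have "\<dots> = q"
      by (simp add: comp_assoc \<open>inv' q \<circ> p = id\<close>)
    finally have "p = q" .
    moreover have "q c \<noteq> p c"
    proof -
      have "p e \<noteq> p c"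
        using e permutes_inj[OF perm] by (auto dest: injD)
      then show ?thesis
        using c e \<open>p c \<noteq> c\<close> by (auto simp: q_def t_def transpose_def)
    qed
    ultimately show False
      by simp
  qed
  then show ?thesis
    using K.one_closed by (auto simp: sym_group_one)
qed

lemma (in group_hom) img_commuting:
  assumes "A \<subseteq> carrier G" and "\<forall>x\<in>A. \<forall>y\<in>A. x \<otimes>\<^bsub>G\<^esub> y = y \<otimes>\<^bsub>G\<^esub> x"
  shows "\<forall>x\<in>h ` A. \<forall>y\<in>h ` A. x \<otimes>\<^bsub>H\<^esub> y = y \<otimes>\<^bsub>H\<^esub> x"
proof (intro ballI)
  fix x y
  assume "x \<in> h ` A" "y \<in> h ` A"
  then obtain a b where "a \<in> A" "b \<in> A" "x = h a" "y = h b"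
    by blast
  then show "x \<otimes>\<^bsub>H\<^esub> y = y \<otimes>\<^bsub>H\<^esub> x"
    using assms by (metis hom_mult subsetD)
qed

locale wreath_product = G: group G + H: group H
  for G :: "('a, 'c) monoid_scheme" and H :: "('b, 'd) monoid_scheme" +
  fixes n :: nat and \<sigma> :: "'a \<Rightarrow> nat \<Rightarrow> nat"
  assumes perm_hom: "\<sigma> \<in> hom G (sym_group n)"
begin

sublocale \<sigma>: group_hom G "sym_group n" \<sigma>
  using perm_hom by (simp add: group_hom_def group_hom_axioms_def sym_group_is_group)

abbreviation W where "W \<equiv> wreath H n G \<sigma>"
abbreviation act where "act \<equiv> wr_act H n \<sigma>"

definition base_group :: "(nat \<Rightarrow> 'b) monoid"
  where "base_group = product_group {1..n} (\<lambda>_. H)"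

sublocale B: group base_group
  by (simp add: base_group_def)

lemma sigma_permutes: "g \<in> carrier G \<Longrightarrow> \<sigma> g permutes {1..n}"
  using \<sigma>.hom_closed by (simp add: sym_group_carrier)

\<comment> \<open>Used as \<open>[simplified]\<close>: the simplifier rewrites \<open>i \<in> {1..n}\<close> to \<open>Suc 0 \<le> i \<and> i \<le> n\<close>.\<close>
lemma inv_sigma_in_range: "g \<in> carrier G \<Longrightarrow> i \<in> {1..n} \<Longrightarrow> inv' (\<sigma> g) i \<in> {1..n}"
  by (meson sigma_permutes permutes_in_image permutes_inv)

lemma act_closed: "g \<in> carrier G \<Longrightarrow> k \<in> carrier base_group \<Longrightarrow> act g k \<in> carrier base_group"
  by (auto simp: wr_act_def base_group_def inv_sigma_in_range[simplified] PiE_iff)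

lemma act_mult:
  assumes "g \<in> carrier G" "x \<in> carrier G"
  shows "act (g \<otimes>\<^bsub>G\<^esub> x) k = act g (act x k)"
proof -
  have "inv' (\<sigma> (g \<otimes>\<^bsub>G\<^esub> x)) = inv' (\<sigma> x) \<circ> inv' (\<sigma> g)"
    using assms permutes_bij[OF sigma_permutes] by (simp add: sym_group_mult o_inv_distrib)
  then show ?thesis
    using assms by (auto simp: wr_act_def inv_sigma_in_range[simplified])
qed

lemma act_one: "k \<in> carrier base_group \<Longrightarrow> act \<one>\<^bsub>G\<^esub> k = k"
  by (auto simp: wr_act_def base_group_def sym_group_one PiE_iff extensional_def fun_eq_iff)

lemma act_hom_mult: "g \<in> carrier G \<Longrightarrow> act g (k \<otimes>\<^bsub>base_group\<^esub> l) = act g k \<otimes>\<^bsub>base_group\<^esub> act g l"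
  by (auto simp: wr_act_def base_group_def inv_sigma_in_range[simplified] fun_eq_iff)

lemma act_hom_one: "g \<in> carrier G \<Longrightarrow> act g \<one>\<^bsub>base_group\<^esub> = \<one>\<^bsub>base_group\<^esub>"
  by (auto simp: wr_act_def base_group_def inv_sigma_in_range[simplified] fun_eq_iff)

lemma act_kernel:
  assumes "x \<in> carrier G" "g \<in> kernel G (sym_group n) \<sigma>"
  shows "act (x \<otimes>\<^bsub>G\<^esub> g) k = act x k"
  using assms \<sigma>.hom_mult[of x g] by (simp add: kernel_def wr_act_def sym_group_one sym_group_mult)

lemma carrier_wreath: "carrier W = carrier base_group \<times> carrier G"
  by (simp add: wreath_def base_group_def)

lemma one_wreath: "\<one>\<^bsub>W\<^esub> = (\<one>\<^bsub>base_group\<^esub>, \<one>\<^bsub>G\<^esub>)"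
  by (simp add: wreath_def base_group_def)

lemma mult_wreath: "(h, g) \<otimes>\<^bsub>W\<^esub> (k, x) = (h \<otimes>\<^bsub>base_group\<^esub> act g k, g \<otimes>\<^bsub>G\<^esub> x)"
  by (simp add: wreath_def base_group_def)

lemma group_wreath: "group W"
proof (rule groupI)
  show "w \<otimes>\<^bsub>W\<^esub> v \<in> carrier W" if "w \<in> carrier W" "v \<in> carrier W" for w v
    using that B.m_closed act_closed by (auto simp: carrier_wreath mult_wreath)
  show "\<one>\<^bsub>W\<^esub> \<in> carrier W"
    by (simp add: carrier_wreath one_wreath)
  show "w \<otimes>\<^bsub>W\<^esub> v \<otimes>\<^bsub>W\<^esub> u = w \<otimes>\<^bsub>W\<^esub> (v \<otimes>\<^bsub>W\<^esub> u)"
    if in_carrier: "w \<in> carrier W" "v \<in> carrier W" "u \<in> carrier W" for w v u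
  proof -
    obtain h g k x l y where
      hkl: "h \<in> carrier base_group" "k \<in> carrier base_group" "l \<in> carrier base_group" and
      gxy: "g \<in> carrier G" "x \<in> carrier G" "y \<in> carrier G" and
      wvu: "w = (h, g)" "v = (k, x)" "u = (l, y)"
      using in_carrier by (auto simp: carrier_wreath)
    have "act g (k \<otimes>\<^bsub>base_group\<^esub> act x l) = act g k \<otimes>\<^bsub>base_group\<^esub> act (g \<otimes>\<^bsub>G\<^esub> x) l"
      using gxy by (simp add: act_hom_mult act_mult)
    then show ?thesis
      using hkl gxy by (simp add: wvu mult_wreath act_closed B.m_assoc G.m_assoc)
  qed
  show "\<one>\<^bsub>W\<^esub> \<otimes>\<^bsub>W\<^esub> w = w" if "w \<in> carrier W" for w
    using that by (auto simp: carrier_wreath mult_wreath one_wreath act_one)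
  show "\<exists>v\<in>carrier W. v \<otimes>\<^bsub>W\<^esub> w = \<one>\<^bsub>W\<^esub>" if w_in: "w \<in> carrier W" for w
  proof -
    obtain h g where w: "w = (h, g)" "h \<in> carrier base_group" "g \<in> carrier G"
      using w_in by (auto simp: carrier_wreath)
    have "act (inv\<^bsub>G\<^esub> g) (inv\<^bsub>base_group\<^esub> h) \<otimes>\<^bsub>base_group\<^esub> act (inv\<^bsub>G\<^esub> g) h = \<one>\<^bsub>base_group\<^esub>"
      using w by (simp flip: act_hom_mult add: act_hom_one)
    then have "(act (inv\<^bsub>G\<^esub> g) (inv\<^bsub>base_group\<^esub> h), inv\<^bsub>G\<^esub> g) \<otimes>\<^bsub>W\<^esub> w = \<one>\<^bsub>W\<^esub>"
      using w by (simp add: mult_wreath one_wreath)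
    moreover have "(act (inv\<^bsub>G\<^esub> g) (inv\<^bsub>base_group\<^esub> h), inv\<^bsub>G\<^esub> g) \<in> carrier W"
      using w by (simp add: carrier_wreath act_closed)
    ultimately show ?thesis
      by blast
  qed
qed

sublocale W: group W
  by (rule group_wreath)

sublocale proj: group_hom W G snd
proof -
  have "snd \<in> hom W G"
    by (rule homI) (auto simp: carrier_wreath mult_wreath)
  then show "group_hom W G snd"
    by (simp add: group_hom_def group_hom_axioms_def W.group_axioms G.group_axioms)
qed

lemma proj_surj: "snd ` carrier W = carrier G"
  using B.one_closed by (force simp: carrier_wreath)

lemma kernel_proj: "kernel W G snd = wr_base H n G"
  by (auto simp: kernel_def carrier_wreath wr_base_def base_group_def)

definition top_embedding :: "'a \<Rightarrow> (nat \<Rightarrow> 'b) \<times> 'a"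
  where "top_embedding g = (\<one>\<^bsub>base_group\<^esub>, g)"

sublocale top: group_hom G W top_embedding
proof -
  have "top_embedding \<in> hom G W"
    by (rule homI) (simp_all add: top_embedding_def carrier_wreath mult_wreath act_hom_one)
  then show "group_hom G W top_embedding"
    by (simp add: group_hom_def group_hom_axioms_def W.group_axioms G.group_axioms)
qed

lemma conj_top_embedding_kernel:
  assumes w: "w \<in> carrier W" and g: "g \<in> kernel G (sym_group n) \<sigma>"
  shows "w \<otimes>\<^bsub>W\<^esub> top_embedding g \<otimes>\<^bsub>W\<^esub> inv\<^bsub>W\<^esub> w
    = top_embedding (snd w \<otimes>\<^bsub>G\<^esub> g \<otimes>\<^bsub>G\<^esub> inv\<^bsub>G\<^esub> snd w)"
proof -
  obtain h x where hx: "w = (h, x)" "h \<in> carrier base_group" "x \<in> carrier G"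
    using w by (auto simp: carrier_wreath)
  define k where "k = fst (inv\<^bsub>W\<^esub> w)"
  have k: "inv\<^bsub>W\<^esub> w = (k, inv\<^bsub>G\<^esub> x)" "k \<in> carrier base_group"
  proof -
    have "snd (inv\<^bsub>W\<^esub> w) = inv\<^bsub>G\<^esub> x"
      using proj.hom_inv[OF w] hx(1) by simp
    then show "inv\<^bsub>W\<^esub> w = (k, inv\<^bsub>G\<^esub> x)"
      by (simp add: k_def prod_eq_iff)
    show "k \<in> carrier base_group"
      using W.inv_closed[OF w] by (auto simp: k_def carrier_wreath)
  qed
  have gG: "g \<in> carrier G"
    using g by (simp add: kernel_def)
  \<comment> \<open>\<open>\<sigma> (x g) = \<sigma> x\<close>, so the base coordinate is that of \<open>w \<otimes> inv w\<close>.\<close>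
  have "h \<otimes>\<^bsub>base_group\<^esub> act x k = \<one>\<^bsub>base_group\<^esub>"
    using W.r_inv[OF w] unfolding k(1) by (simp add: hx(1) mult_wreath one_wreath)
  then show ?thesis
    unfolding k(1) using hx k(2) gG
    by (simp add: top_embedding_def mult_wreath act_hom_one act_kernel[OF _ g] B.r_one)
qed

lemma normal_top_embedding_img:
  assumes N: "N \<lhd> G" and ker: "N \<subseteq> kernel G (sym_group n) \<sigma>"
  shows "top_embedding ` N \<lhd> W"
  unfolding W.normal_inv_iff
proof
  show "subgroup (top_embedding ` N) W"
    using top.subgroup_img_is_subgroup normal_imp_subgroup[OF N] .
  show "\<forall>w\<in>carrier W. \<forall>a\<in>top_embedding ` N. w \<otimes>\<^bsub>W\<^esub> a \<otimes>\<^bsub>W\<^esub> inv\<^bsub>W\<^esub> w \<in> top_embedding ` N"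
    using conj_top_embedding_kernel ker normal.inv_op_closed2[OF N] proj.hom_closed by blast
qed

lemma abelian_normal_proj_img_in_kernel:
  assumes n: "n \<ge> 5" and surj: "\<sigma> ` carrier G = carrier (sym_group n)"
    and A: "A \<lhd> W" and comm: "\<forall>x\<in>A. \<forall>y\<in>A. x \<otimes>\<^bsub>W\<^esub> y = y \<otimes>\<^bsub>W\<^esub> x"
  shows "snd ` A \<subseteq> kernel G (sym_group n) \<sigma>"
proof -
  have A_sub: "A \<subseteq> carrier W"
    using A normal_imp_subgroup subgroup.subset by blast
  have "snd ` A \<lhd> G"
    using normal.surj_hom_normal_subgroup[OF A proj.group_hom_axioms proj_surj] .
  then have "\<sigma> ` snd ` A \<lhd> sym_group n"
    using normal.surj_hom_normal_subgroup[OF _ \<sigma>.group_hom_axioms surj] by blast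
  moreover have "\<forall>p\<in>\<sigma> ` snd ` A. \<forall>q\<in>\<sigma> ` snd ` A. p \<otimes>\<^bsub>sym_group n\<^esub> q = q \<otimes>\<^bsub>sym_group n\<^esub> p"
    using \<sigma>.img_commuting[OF _ proj.img_commuting[OF A_sub comm]] A_sub proj.hom_closed by blast
  ultimately have "\<sigma> ` snd ` A = {id}"
    using abelian_normal_subgroup_sym_group_trivial[OF n] by blast
  moreover have "snd ` A \<subseteq> carrier G"
    using A_sub proj.hom_closed by blast
  ultimately show ?thesis
    by (auto simp: kernel_def sym_group_one)
qed

end

theorem theorem3p7:
  fixes G :: "('a, 'c) monoid_scheme" and H :: "('b, 'd) monoid_scheme"
    and n :: nat and \<sigma> :: "'a \<Rightarrow> nat \<Rightarrow> nat"
  assumes "n \<ge> 5"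
    and "group G" and "group H"
    and "carrier G \<noteq> {\<one>\<^bsub>G\<^esub>}" and "carrier H \<noteq> {\<one>\<^bsub>H\<^esub>}"
    and "\<sigma> \<in> hom G (sym_group n)"
    and "\<sigma> ` carrier G = carrier (sym_group n)"
  shows "(\<forall>A. A \<lhd> wreath H n G \<sigma> \<and>
              (\<forall>x\<in>A. \<forall>y\<in>A. x \<otimes>\<^bsub>wreath H n G \<sigma>\<^esub> y = y \<otimes>\<^bsub>wreath H n G \<sigma>\<^esub> x)
              \<longrightarrow> A \<subseteq> wr_base H n G)
     \<longleftrightarrow>
         (\<forall>N. N \<lhd> G \<and> (\<forall>x\<in>N. \<forall>y\<in>N. x \<otimes>\<^bsub>G\<^esub> y = y \<otimes>\<^bsub>G\<^esub> x)
              \<and> N \<subseteq> kernel G (sym_group n) \<sigma>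
              \<longrightarrow> N = {\<one>\<^bsub>G\<^esub>})"
proof -
  interpret wreath_product G H n \<sigma>
    using assms(2,3,6) by (simp add: wreath_product_def wreath_product_axioms_def)
  show ?thesis
  proof (intro iffI allI impI)
    fix N
    assume in_base: "\<forall>A. A \<lhd> W \<and> (\<forall>x\<in>A. \<forall>y\<in>A. x \<otimes>\<^bsub>W\<^esub> y = y \<otimes>\<^bsub>W\<^esub> x) \<longrightarrow> A \<subseteq> wr_base H n G"
      and N: "N \<lhd> G \<and> (\<forall>x\<in>N. \<forall>y\<in>N. x \<otimes>\<^bsub>G\<^esub> y = y \<otimes>\<^bsub>G\<^esub> x) \<and> N \<subseteq> kernel G (sym_group n) \<sigma>"
    have "N \<subseteq> carrier G"
      using N normal_imp_subgroup subgroup.subset by blast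
    then have "top_embedding ` N \<subseteq> wr_base H n G"
      using in_base N normal_top_embedding_img top.img_commuting by blast
    then have "N \<subseteq> {\<one>\<^bsub>G\<^esub>}"
      by (auto simp: top_embedding_def wr_base_def)
    then show "N = {\<one>\<^bsub>G\<^esub>}"
      using N normal_imp_subgroup subgroup.one_closed by blast
  next
    fix A
    assume trivial: "\<forall>N. N \<lhd> G \<and> (\<forall>x\<in>N. \<forall>y\<in>N. x \<otimes>\<^bsub>G\<^esub> y = y \<otimes>\<^bsub>G\<^esub> x) \<and> N \<subseteq> kernel G (sym_group n) \<sigma>
        \<longrightarrow> N = {\<one>\<^bsub>G\<^esub>}"
      and A: "A \<lhd> W \<and> (\<forall>x\<in>A. \<forall>y\<in>A. x \<otimes>\<^bsub>W\<^esub> y = y \<otimes>\<^bsub>W\<^esub> x)"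
    have A_sub: "A \<subseteq> carrier W"
      using A normal_imp_subgroup subgroup.subset by blast
    have "snd ` A \<lhd> G"
      using A normal.surj_hom_normal_subgroup[OF _ proj.group_hom_axioms proj_surj] by blast
    then have "snd ` A = {\<one>\<^bsub>G\<^esub>}"
      using trivial proj.img_commuting[OF A_sub] A abelian_normal_proj_img_in_kernel[OF assms(1,7)]
      by blast
    then show "A \<subseteq> wr_base H n G"
      using A_sub by (auto simp: kernel_proj[symmetric] kernel_def)
  qed
qed

end
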